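(* Let $n>1$, let $R\in\mathbb{R}^{n\times n}$ be any matrix, let $C\in\mathbb{R}_{\geq 0}^{n\times n}$ be column-stochastic ($\mathbf{1}^\top C=\mathbf{1}^\top$), and let $\gamma>0$. Let ${\bm x}_0\in\mathbb{R}^n$, ${\bm s}_0=\mathbf{0}$, and let $(\check{\bm x}_k)_{k\ge 0}$, $(\check{\bm s}_k)_{k\ge0}$ be arbitrary sequences in $\mathbb{R}^n$ (the quantized values transmitted by the agents). Define for $k\in\mathbb{Z}_{\ge 0}$ \[ {\bm x}_{k+1} = {\bm x}_k + \gamma{\bm s}_k + (R-I)\check{\bm x}_k,\qquad {\bm s}_{k+1} = {\bm x}_k - {\bm x}_{k+1} + {\bm s}_k + (C-I)\check{\bm s}_k . \] Then for all $k\in\mathbb{Z}_{\geq 0}$, $\mathbf{1}^{\top}({\bm x}_k+{\bm s}_k)=\mathbf{1}^{\top}{\bm x}_0$; in particular the quantity $\frac1n\mathbf{1}^\top({\bm x}_k+{\bm s}_k)$ equals the initial average $\frac1n\mathbf{1}^\top{\bm x}_0$ for all $k$.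
   Context: In the paper, $R$ is the row-stochastic "pull" matrix with $r_{ji}=1/(1+d_j^{\mathrm{in}})$ for $v_i$ an in-neighbor of $v_j$ or $i=j$ (and $0$ otherwise), $C$ is the column-stochastic "push" matrix with $c_{lj}=1/(1+d_j^{\mathrm{out}})$ for $v_l$ an out-neighbor of $v_j$ or $l=j$ (and $0$ otherwise), on a directed graph with $n$ nodes; $\check{\bm x}_k,\check{\bm s}_k$ are quantized versions of ${\bm x}_k,{\bm s}_k$. $\mathbf{1}$ is the all-ones vector. *)

theory Defs
  imports "HOL-Analysis.Analysis"
begin

end

theory Submission
  imports Defs
begin

(* In x + s the x-update cancels, so each step only adds (C - I) sq k, whose entries sum to
   zero because C is column-stochastic. *)

lemma sum_matrix_vector_mult_column_stochastic:
  fixes C :: "'a::comm_semiring_1 ^'n ^'m"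
  assumes "\<And>j. (\<Sum>i\<in>UNIV. C $ i $ j) = 1"
  shows "(\<Sum>i\<in>UNIV. (C *v v) $ i) = (\<Sum>j\<in>UNIV. v $ j)"
proof -
  have "(\<Sum>i\<in>UNIV. (C *v v) $ i) = (\<Sum>i\<in>UNIV. \<Sum>j\<in>UNIV. C $ i $ j * v $ j)"
    by (simp add: matrix_vector_mult_def)
  also have "\<dots> = (\<Sum>j\<in>UNIV. (\<Sum>i\<in>UNIV. C $ i $ j) * v $ j)"
    by (subst sum.swap) (simp add: sum_distrib_right)
  finally show ?thesis
    using assms by simp
qed

lemma sum_column_stochastic_minus_id_mult:
  fixes C :: "'a::comm_ring_1 ^'n ^'n"
  assumes "\<And>j. (\<Sum>i\<in>UNIV. C $ i $ j) = 1"
  shows "(\<Sum>i\<in>UNIV. ((C - mat 1) *v v) $ i) = 0"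
  using sum_matrix_vector_mult_column_stochastic[OF assms]
  by (simp add: matrix_vector_mult_diff_rdistrib sum_subtractf)

theorem lemma1:
  fixes R C :: "real ^'n ^'n"
    and \<gamma> :: real
    and x s xq sq :: "nat \<Rightarrow> real ^'n"
  assumes n_gt1: "CARD('n) > 1"
    and C_nonneg: "\<forall>i j. C $ i $ j \<ge> 0"
    and C_colstoch: "\<forall>j. (\<Sum>i\<in>UNIV. C $ i $ j) = 1"
    and gamma_pos: "\<gamma> > 0"
    and s0: "s 0 = 0"
    and x_step: "\<forall>k. x (Suc k) = x k + \<gamma> *\<^sub>R s k + (R - mat 1) *v xq k"
    and s_step: "\<forall>k. s (Suc k) = x k - x (Suc k) + s k + (C - mat 1) *v sq k"
  shows "\<forall>k. (\<Sum>i\<in>UNIV. (x k + s k) $ i) = (\<Sum>i\<in>UNIV. x 0 $ i)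
           \<and> (\<Sum>i\<in>UNIV. (x k + s k) $ i) / real CARD('n) = (\<Sum>i\<in>UNIV. x 0 $ i) / real CARD('n)"
proof -
  have total_preserved: "(\<Sum>i\<in>UNIV. (x k + s k) $ i) = (\<Sum>i\<in>UNIV. x 0 $ i)" for k
  proof (induction k)
    case 0
    show ?case using s0 by simp
  next
    case (Suc k)
    have "x (Suc k) + s (Suc k) = (x k + s k) + (C - mat 1) *v sq k"
      using s_step by simp
    then show ?case
      using Suc sum_column_stochastic_minus_id_mult[of C "sq k"] C_colstoch
      by (simp add: sum.distrib)
  qed
  then show ?thesis by simp
qed

end
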